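(* Let $n\ge 2$, let $\mathbb{F}_q$ be a finite field with $q$ elements, and let $V$ be an $n$-dimensional vector space over $\mathbb{F}_q$. Let $\mathcal{F}$ be the set of complete flags $V_*=(V_0\subset V_1\subset\dots\subset V_n)$ in $V$ with $\dim V_k=k$ for $k\in[0,n]$. Let $\mathcal{H}$ be the $\mathbb{C}$-vector space of functions $\mathcal{F}\times\mathcal{F}\to\mathbb{C}$ constant on the orbits of the diagonal action of $GL(V)$, with multiplication $(f*f')(W_*,V_* )=\sum_{V'_*\in\mathcal{F}}f(W_*,V'_* )f'(V'_*,V_* )$. Define $f_1\in\mathcal{H}$ by: $f_1(W_*,V'_* )=1$ if there exists $g\in[1,n]$ with $W_r=V'_r$ for $r\in[1,g-1]$ and $V'_r\ne W_r\subset V'_{r+1}$ for $r\in[g,n-1]$; and $f_1(W_*,V'_* )=0$ otherwise. For $t\in[0,n]$ let $X_t\subset\mathcal{F}\times\mathcal{F}$ be the set of pairs $(V'_*,V_* )$ for which there exists a sequence $1\le i_1<i_2<\dots<i_{n-t}\le n$ with $V'_r\subset V_{i_r}$ and $V'_r\not\subset V_{i_r-1}$ for all $r\in[1,n-t]$, and let $f_t\in\mathcal{H}$ be the indicator function of $X_t$ (for $t=1$ this coincides with $f_1$ above). Then for every $t\in[1,n-1]$, $$f_1*f_t=(1+q+q^2+\dots+q^{t-1})f_t+q^tf_{t+1}.$$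
   Context: For integers $a,b$, $[a,b]$ denotes the set of integers $c$ with $a\le c\le b$. $GL(V)$ acts on $\mathcal{F}$ by $gV_*=(gV_0\subset gV_1\subset\dots\subset gV_n)$ and on $\mathcal{F}\times\mathcal{F}$ diagonally. *)

theory Defs
  imports "HOL-Analysis.Analysis"
begin

text \<open>A complete flag is a function k \<mapsto> V_k, with V_k a subspace
of dimension k for k in [0,n], V_k contained in V_(k+1), and normalised to the empty set
for k > n (so that flags correspond bijectively to such functions).\<close>

definition flags :: "(nat \<Rightarrow> ('a::field ^ 'n) set) set" where
  "flags = {V. (\<forall>k\<le>CARD('n). vec.subspace (V k) \<and> vec.dim (V k) = k)
               \<and> (\<forall>k<CARD('n). V k \<subseteq> V (Suc k))
               \<and> (\<forall>k>CARD('n). V k = {})}"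

definition hconv ::
  "((nat \<Rightarrow> ('a::field ^ 'n) set) \<Rightarrow> (nat \<Rightarrow> ('a ^ 'n) set) \<Rightarrow> complex) \<Rightarrow>
   ((nat \<Rightarrow> ('a ^ 'n) set) \<Rightarrow> (nat \<Rightarrow> ('a ^ 'n) set) \<Rightarrow> complex) \<Rightarrow>
   (nat \<Rightarrow> ('a ^ 'n) set) \<Rightarrow> (nat \<Rightarrow> ('a ^ 'n) set) \<Rightarrow> complex" where
  "hconv f f' W V = (\<Sum>V'\<in>flags. f W V' * f' V' V)"

definition hf1 :: "(nat \<Rightarrow> ('a::field ^ 'n) set) \<Rightarrow> (nat \<Rightarrow> ('a ^ 'n) set) \<Rightarrow> complex" where
  "hf1 W V' = (if \<exists>g\<in>{1..CARD('n)}.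
                   (\<forall>r\<in>{1..g-1}. W r = V' r)
                 \<and> (\<forall>r\<in>{g..CARD('n)-1}. V' r \<noteq> W r \<and> W r \<subseteq> V' (r+1))
               then 1 else 0)"

definition hX :: "nat \<Rightarrow> ((nat \<Rightarrow> ('a::field ^ 'n) set) \<times> (nat \<Rightarrow> ('a ^ 'n) set)) set" where
  "hX t = {(V', V). V' \<in> flags \<and> V \<in> flags \<and>
             (\<exists>i::nat \<Rightarrow> nat. strict_mono_on {1..CARD('n)-t} i
                \<and> (\<forall>r\<in>{1..CARD('n)-t}. 1 \<le> i r \<and> i r \<le> CARD('n)
                      \<and> V' r \<subseteq> V (i r) \<and> \<not> V' r \<subseteq> V (i r - 1)))}"

definition hft :: "nat \<Rightarrow> (nat \<Rightarrow> ('a::field ^ 'n) set) \<Rightarrow> (nat \<Rightarrow> ('a ^ 'n) set) \<Rightarrow> complex" where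
  "hft t V' V = (if (V', V) \<in> hX t then 1 else 0)"

end

theory Submission
  imports Defs
begin

(* Write q for the size of the field, n = CARD('n) and H = W_(n-1). The flags V' with
   f_1(W, V') = 1 are W itself and, for g in [1, n-1] and v outside H, the flags W^(g,v) with
   W^(g,v)_r = W_r for r < g and W^(g,v)_r = W_(r-1) + <v> for r >= g; this flag is determined by
   W_(g-1) + <v>, so it arises from exactly the q^g - q^(g-1) vectors of that space outside
   W_(g-1). Writing a_r (the level of V'_r) for the least i with V'_r contained in V_i, the pair
   (V', V) lies in X_t iff a_1 < ... < a_(n-t).
   For g > n-t the flag W^(g,v) agrees with W up to n-t, so these flags and W itself contribute
   (1 + q + ... + q^(t-1)) f_t(W, V). For g <= n-t the flag W^(g,v) lies in X_t iff (W, V) lies in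
   X_(t+1) and v lies in V_(b_g) but not in V_(a_(g-1)), where a_r now refers to W and
   b_g = a_g - 1 (b_g = n for g = n-t). Counting such v outside H, the contributions of the g <= n-t
   telescope to q^t, because V_(a-1) meets the complement of H in 1/q as many lines as V_a
   whenever a is the level of a subspace of H. *)

section \<open>Subspaces of a finite vector space\<close>

lemma card_span_insert:
  fixes B :: "('a::{field,finite}^'n) set"
  assumes b: "b \<notin> vec.span B"
  shows "card (vec.span (insert b B)) = CARD('a) * card (vec.span B)"
proof -
  let ?f = "\<lambda>(k, y). k *s b + y"
  have image: "vec.span (insert b B) = ?f ` (UNIV \<times> vec.span B)"
  proof safe
    fix x assume "x \<in> vec.span (insert b B)"
    then obtain k where "x - k *s b \<in> vec.span B" using vec.span_breakdown_eq by blast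
    then show "x \<in> ?f ` (UNIV \<times> vec.span B)"
      by (intro image_eqI[of _ _ "(k, x - k *s b)"]) auto
  next
    fix k y assume "y \<in> vec.span B"
    then show "k *s b + y \<in> vec.span (insert b B)"
      by (meson insertI1 subsetD subset_insertI vec.span_add vec.span_base vec.span_mono vec.span_scale)
  qed
  have "inj_on ?f (UNIV \<times> vec.span B)"
  proof (rule inj_onI, clarify)
    fix k y k' y' assume y: "y \<in> vec.span B" "y' \<in> vec.span B" and eq: "k *s b + y = k' *s b + y'"
    show "k = k' \<and> y = y'"
    proof (rule ccontr)
      assume "\<not> (k = k' \<and> y = y')"
      then have "k \<noteq> k'" using eq by auto
      have diff: "(k - k') *s b = y' - y" using eq by (simp add: algebra_simps)
      have "b = inverse (k - k') *s ((k - k') *s b)"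
        using \<open>k \<noteq> k'\<close> by (simp only: vec.scale_scale) simp
      also have "\<dots> = inverse (k - k') *s (y' - y)" by (simp only: diff)
      also have "\<dots> \<in> vec.span B" using y by (intro vec.span_scale vec.span_diff)
      finally show False using b by simp
    qed
  qed
  then show ?thesis by (simp add: image card_image card_cartesian_product)
qed

lemma card_span_independent:
  fixes B :: "('a::{field,finite}^'n) set"
  assumes "vec.independent B"
  shows "card (vec.span B) = CARD('a) ^ card B"
proof -
  have "finite B" by simp
  then show ?thesis using assms
  proof (induction B rule: finite_induct)
    case (insert b B)
    then have "vec.independent B" "b \<notin> vec.span B" using vec.independent_insert[of b B] by auto
    then show ?case using insert.IH insert.hyps card_span_insert[of b B] by simp
  qed simp
qed

lemma card_subspace:
  fixes S :: "('a::{field,finite}^'n) set"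
  assumes "vec.subspace S"
  shows "card S = CARD('a) ^ vec.dim S"
proof -
  obtain B where "B \<subseteq> S" "vec.independent B" "S \<subseteq> vec.span B" "card B = vec.dim S"
    using vec.basis_exists[of S] by blast
  moreover then have "vec.span B = S" using assms vec.span_subspace by blast
  ultimately show ?thesis using card_span_independent[of B] by simp
qed

lemma card_diff_subspace:
  fixes S T :: "('a::{field,finite}^'n) set"
  assumes "vec.subspace S" "vec.subspace T" "S \<subseteq> T"
  shows "card (T - S) = CARD('a) ^ vec.dim T - CARD('a) ^ vec.dim S"
  using card_Diff_subset[of S T] assms by (simp add: card_subspace)

lemma dim_span_insert:
  fixes S :: "('a::field^'n) set"
  assumes "vec.subspace S" "v \<notin> S"
  shows "vec.dim (vec.span (insert v S)) = vec.dim S + 1"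
proof -
  have "v \<notin> vec.span S" using assms vec.span_eq_iff by blast
  then show ?thesis by (simp add: vec.dim_insert)
qed

lemma subspace_eq_span_insert:
  fixes X Y :: "('a::field^'n) set"
  assumes "vec.subspace X" "vec.subspace Y" "X \<subseteq> Y" "v \<in> Y" "v \<notin> X"
    and "vec.dim Y = vec.dim X + 1"
  shows "Y = vec.span (insert v X)"
proof -
  have "vec.span (insert v X) \<subseteq> Y" using assms by (intro vec.span_minimal) auto
  moreover have "vec.dim (vec.span (insert v X)) = vec.dim Y"
    using assms dim_span_insert by simp
  ultimately have "vec.span (insert v X) = Y"
    using vec.subspace_dim_equal[OF vec.subspace_span assms(2)] by (metis order_refl)
  then show ?thesis by simp
qed

lemma span_insert_cong:
  fixes X Y :: "('a::field^'n) set"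
  assumes "vec.span (insert u X) = vec.span (insert v X)" "X \<subseteq> Y"
  shows "vec.span (insert u Y) = vec.span (insert v Y)"
proof -
  have mono: "vec.span (insert x X) \<subseteq> vec.span (insert x Y)" for x
    using assms(2) by (intro vec.span_mono) auto
  have "u \<in> vec.span (insert v Y)"
    using assms(1) mono[of v] vec.span_base[of u "insert u X"] by blast
  moreover have "v \<in> vec.span (insert u Y)"
    using assms(1) mono[of u] vec.span_base[of v "insert v X"] by blast
  ultimately show ?thesis
    by (intro subset_antisym vec.span_minimal) (auto intro: vec.span_base)
qed

lemma dim_inter_hyperplane:
  fixes U H :: "('a::field^'n) set"
  assumes U: "vec.subspace U" and H: "vec.subspace H" "vec.dim H = CARD('n) - 1"
    and "\<not> U \<subseteq> H"
  shows "vec.dim (U \<inter> H) = vec.dim U - 1"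
proof -
  have "vec.dim {x + y |x y. x \<in> U \<and> y \<in> H} \<le> vec.dim (UNIV :: ('a^'n) set)"
    by (rule vec.dim_subset) simp
  then have "vec.dim {x + y |x y. x \<in> U \<and> y \<in> H} \<le> CARD('n)"
    by (simp only: vec_dim_card)
  then have "vec.dim U - 1 \<le> vec.dim (U \<inter> H)"
    using vec.dim_sums_Int[OF U H(1)] H(2) by linarith
  moreover have "vec.dim (U \<inter> H) \<le> vec.dim U" by (simp add: vec.dim_subset)
  moreover have "vec.dim (U \<inter> H) \<noteq> vec.dim U"
    using vec.subspace_dim_equal[OF vec.subspace_inter[OF U H(1)] U] \<open>\<not> U \<subseteq> H\<close> by auto
  ultimately show ?thesis by linarith
qed

lemma card_diff_hyperplane:
  fixes U H :: "('a::{field,finite}^'n) set"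
  assumes U: "vec.subspace U" and H: "vec.subspace H" "vec.dim H = CARD('n) - 1"
    and "\<not> U \<subseteq> H"
  shows "card (U - H) = CARD('a) ^ vec.dim U - CARD('a) ^ (vec.dim U - 1)"
proof -
  have "U - H = U - U \<inter> H" by blast
  then show ?thesis
    using card_diff_subspace[OF vec.subspace_inter[OF U H(1)] U] dim_inter_hyperplane[OF assms]
    by simp
qed

section \<open>Flags and levels\<close>

context
  fixes V :: "nat \<Rightarrow> ('a::field^'n) set"
  assumes V: "V \<in> flags"
begin

lemma flag_subspace: "k \<le> CARD('n) \<Longrightarrow> vec.subspace (V k)"
  using V unfolding flags_def by auto

lemma flag_dim: "k \<le> CARD('n) \<Longrightarrow> vec.dim (V k) = k"
  using V unfolding flags_def by auto

lemma flag_Suc_subset: "k < CARD('n) \<Longrightarrow> V k \<subseteq> V (Suc k)"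
  using V unfolding flags_def by auto

lemma flag_beyond: "CARD('n) < k \<Longrightarrow> V k = {}"
  using V unfolding flags_def by auto

lemma flag_mono:
  assumes "i \<le> j" "j \<le> CARD('n)"
  shows "V i \<subseteq> V j"
  using assms
proof (induction j rule: dec_induct)
  case (step k)
  then have "V i \<subseteq> V k" "V k \<subseteq> V (Suc k)" using flag_Suc_subset by auto
  then show ?case by blast
qed simp

lemma flag_0: "V 0 = {0}"
  using flag_subspace[of 0] flag_dim[of 0] vec.subspace_0 vec.dim_eq_0 by blast

lemma flag_top: "V CARD('n) = UNIV"
  using vec.subspace_dim_equal[of "V CARD('n)" UNIV] flag_subspace flag_dim vec_dim_card
  by (metis subset_UNIV vec.subspace_UNIV order_refl)

lemma flag_nontrivial: "1 \<le> k \<Longrightarrow> k \<le> CARD('n) \<Longrightarrow> \<not> V k \<subseteq> {0}"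
  using flag_dim[of k] vec.dim_eq_0[of "V k"] by auto

end

lemma finite_flags: "finite (flags :: (nat \<Rightarrow> ('a::{field,finite}^'n) set) set)"
proof -
  let ?restr = "\<lambda>V::nat \<Rightarrow> ('a^'n) set. restrict V {..CARD('n)}"
  have "inj_on ?restr flags"
  proof (rule inj_onI, rule ext)
    fix U V :: "nat \<Rightarrow> ('a^'n) set" and k
    assume U: "U \<in> flags" and V: "V \<in> flags" and restr: "?restr U = ?restr V"
    show "U k = V k"
    proof (cases "k \<le> CARD('n)")
      case True
      then show ?thesis using fun_cong[OF restr, of k] by simp
    qed (use flag_beyond[OF U] flag_beyond[OF V] in simp)
  qed
  moreover have "?restr ` flags \<subseteq> (\<Pi>\<^sub>E i \<in> {..CARD('n)}. UNIV)" by auto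
  moreover have "finite (\<Pi>\<^sub>E i \<in> {..CARD('n)}. (UNIV :: ('a^'n) set set))"
    by (rule finite_PiE) auto
  ultimately show ?thesis by (meson finite_imageD finite_subset)
qed

definition level :: "(nat \<Rightarrow> ('a::field^'n) set) \<Rightarrow> ('a^'n) set \<Rightarrow> nat" where
  "level V U = (LEAST i. U \<subseteq> V i)"

definition levels_increasing ::
  "(nat \<Rightarrow> ('a::field^'n) set) \<Rightarrow> (nat \<Rightarrow> ('a^'n) set) \<Rightarrow> nat \<Rightarrow> bool" where
  "levels_increasing A V m \<longleftrightarrow> (\<forall>r. 1 \<le> r \<and> r < m \<longrightarrow> level V (A r) < level V (A (Suc r)))"

context
  fixes V :: "nat \<Rightarrow> ('a::field^'n) set"
  assumes V: "V \<in> flags"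
begin

lemma level_subset: "U \<subseteq> V (level V U)"
  unfolding level_def by (rule LeastI[of _ "CARD('n)"]) (simp add: flag_top[OF V])

lemma level_le_card: "level V U \<le> CARD('n)"
  unfolding level_def by (rule Least_le) (simp add: flag_top[OF V])

lemma level_le: "U \<subseteq> V i \<Longrightarrow> level V U \<le> i"
  unfolding level_def by (rule Least_le)

lemma subset_iff_level_le: "i \<le> CARD('n) \<Longrightarrow> U \<subseteq> V i \<longleftrightarrow> level V U \<le> i"
  using level_le level_subset flag_mono[OF V] by blast

lemma level_eqI:
  assumes "i \<le> CARD('n)" "U \<subseteq> V i" "\<not> U \<subseteq> V (i - 1)"
  shows "level V U = i"
proof -
  have "level V U \<le> i" using assms(2) by (rule level_le)
  moreover have "\<not> level V U \<le> i - 1"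
    using assms subset_iff_level_le[of "i - 1" U] by auto
  ultimately show ?thesis by simp
qed

lemma level_pos: "\<not> U \<subseteq> {0} \<Longrightarrow> 1 \<le> level V U"
  using level_subset[of U] flag_0[OF V] by (cases "level V U") auto

lemma not_subset_below_level:
  assumes "\<not> U \<subseteq> {0}"
  shows "\<not> U \<subseteq> V (level V U - 1)"
  using level_le[of U "level V U - 1"] level_pos[OF assms] by auto

lemma level_span_insert:
  assumes "vec.subspace S"
  shows "level V (vec.span (insert v S)) = max (level V S) (level V {v})"
proof -
  let ?M = "max (level V S) (level V {v})"
  have M: "?M \<le> CARD('n)" using level_le_card by simp
  have "S \<subseteq> V ?M" "{v} \<subseteq> V ?M"
    using subset_iff_level_le[OF M, of S] subset_iff_level_le[OF M, of "{v}"] by simp_all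
  then have "vec.span (insert v S) \<subseteq> V ?M"
    using flag_subspace[OF V M] by (intro vec.span_minimal) auto
  then have "level V (vec.span (insert v S)) \<le> ?M" by (rule level_le)
  moreover have "insert v S \<subseteq> V (level V (vec.span (insert v S)))"
    using level_subset[of "vec.span (insert v S)"] vec.span_superset[of "insert v S"] by blast
  then have "?M \<le> level V (vec.span (insert v S))" by (simp add: level_le)
  ultimately show ?thesis by simp
qed

lemma level_flag_mono:
  assumes W: "W \<in> flags" and "r \<le> s" "s \<le> CARD('n)"
  shows "level V (W r) \<le> level V (W s)"
  using flag_mono[OF W assms(2,3)] level_subset[of "W s"] level_le[of "W r"] by blast

lemma level_flag_0:
  assumes W: "W \<in> flags"
  shows "level V (W 0) = 0"
  using level_le[of "W 0" 0] flag_0[OF W] flag_0[OF V] by simp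

lemma level_flag_pred_less:
  assumes W: "W \<in> flags" and inc: "levels_increasing W V k"
    and g: "1 \<le> g" "g \<le> k" "g \<le> CARD('n)"
  shows "level V (W (g - 1)) < level V (W g)"
proof (cases "g = 1")
  case True
  then show ?thesis using level_flag_0[OF W] level_pos[OF flag_nontrivial[OF W, of 1]] g by simp
next
  case False
  then have "1 \<le> g - 1 \<and> g - 1 < k" using g by auto
  then show ?thesis using inc g unfolding levels_increasing_def by fastforce
qed

end

lemma strict_mono_on_atLeastAtMostI:
  fixes f :: "nat \<Rightarrow> 'b::order"
  assumes "\<And>r. a \<le> r \<Longrightarrow> r < b \<Longrightarrow> f r < f (Suc r)"
  shows "strict_mono_on {a..b} f"
proof (rule strict_mono_onI)
  fix r s assume "r \<in> {a..b}" "s \<in> {a..b}" "r < s"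
  then have "Suc r \<le> s" "a \<le> r" "s \<le> b" by auto
  then show "f r < f s"
  proof (induction s rule: dec_induct)
    case base
    then show ?case using assms by simp
  next
    case (step k)
    then show ?case using assms[of k] by fastforce
  qed
qed

lemma hX_iff_levels_increasing:
  fixes A V :: "nat \<Rightarrow> ('a::field^'n) set"
  assumes A: "A \<in> flags" and V: "V \<in> flags"
  shows "(A, V) \<in> hX t \<longleftrightarrow> levels_increasing A V (CARD('n) - t)"
proof
  assume "(A, V) \<in> hX t"
  then obtain i where i: "strict_mono_on {1..CARD('n) - t} i"
    and steps: "\<forall>r\<in>{1..CARD('n) - t}. i r \<le> CARD('n) \<and> A r \<subseteq> V (i r) \<and> \<not> A r \<subseteq> V (i r - 1)"
    unfolding hX_def by auto
  have level_eq: "level V (A r) = i r" if "r \<in> {1..CARD('n) - t}" for r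
    using steps that by (intro level_eqI[OF V]) auto
  show "levels_increasing A V (CARD('n) - t)"
    unfolding levels_increasing_def
  proof (intro allI impI)
    fix r assume "1 \<le> r \<and> r < CARD('n) - t"
    then show "level V (A r) < level V (A (Suc r))"
      using strict_mono_onD[OF i, of r "Suc r"] level_eq by simp
  qed
next
  assume inc: "levels_increasing A V (CARD('n) - t)"
  have "strict_mono_on {1..CARD('n) - t} (\<lambda>r. level V (A r))"
    using inc unfolding levels_increasing_def by (intro strict_mono_on_atLeastAtMostI) auto
  moreover have "1 \<le> level V (A r) \<and> level V (A r) \<le> CARD('n) \<and> A r \<subseteq> V (level V (A r))
      \<and> \<not> A r \<subseteq> V (level V (A r) - 1)" if "r \<in> {1..CARD('n) - t}" for r
    using that flag_nontrivial[OF A, of r] level_pos[OF V] level_le_card[OF V] level_subset[OF V]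
      not_subset_below_level[OF V] by auto
  ultimately have "\<exists>i. strict_mono_on {1..CARD('n) - t} i \<and> (\<forall>r\<in>{1..CARD('n) - t}.
      1 \<le> i r \<and> i r \<le> CARD('n) \<and> A r \<subseteq> V (i r) \<and> \<not> A r \<subseteq> V (i r - 1))"
    by (intro exI[of _ "\<lambda>r. level V (A r)"]) blast
  then show "(A, V) \<in> hX t"
    unfolding hX_def using A V by simp
qed

lemma hft_eq:
  fixes A V :: "nat \<Rightarrow> ('a::field^'n) set"
  assumes "A \<in> flags" "V \<in> flags"
  shows "hft t A V = (if levels_increasing A V (CARD('n) - t) then 1 else 0)"
  unfolding hft_def using assms by (simp add: hX_iff_levels_increasing)

section \<open>The flags adjacent to W\<close>

definition insert_flag :: "(nat \<Rightarrow> ('a::field^'n) set) \<Rightarrow> nat \<Rightarrow> 'a^'n \<Rightarrow> nat \<Rightarrow> ('a^'n) set" where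
  "insert_flag W g v r =
     (if r < g then W r else if r \<le> CARD('n) then vec.span (insert v (W (r - 1))) else {})"

lemma insert_flag_below:
  fixes W :: "nat \<Rightarrow> ('a::field^'n) set"
  shows "r < g \<Longrightarrow> insert_flag W g v r = W r"
  unfolding insert_flag_def by simp

lemma hf1_self:
  fixes W :: "nat \<Rightarrow> ('a::field^'n) set"
  shows "hf1 W W = 1"
  unfolding hf1_def by (intro if_P bexI[of _ "CARD('n)"]) auto

lemma in_insert_flag:
  fixes W :: "nat \<Rightarrow> ('a::field^'n) set"
  shows "g \<le> r \<Longrightarrow> r \<le> CARD('n) \<Longrightarrow> v \<in> insert_flag W g v r"
  unfolding insert_flag_def by (auto intro: vec.span_base)

context
  fixes W :: "nat \<Rightarrow> ('a::field^'n) set"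
  assumes W: "W \<in> flags"
begin

lemma notin_flag_below_hyperplane:
  assumes "v \<notin> W (CARD('n) - 1)" "r < CARD('n)"
  shows "v \<notin> W r"
proof
  assume "v \<in> W r"
  moreover have "W r \<subseteq> W (CARD('n) - 1)" using assms(2) by (intro flag_mono[OF W]) auto
  ultimately show False using assms(1) by blast
qed

lemma insert_flag_in_flags:
  assumes g: "1 \<le> g" and v: "v \<notin> W (CARD('n) - 1)"
  shows "insert_flag W g v \<in> flags"
proof -
  have dim: "vec.dim (insert_flag W g v k) = k" if "k \<le> CARD('n)" for k
  proof (cases "k < g")
    case False
    have "vec.dim (vec.span (insert v (W (k - 1)))) = vec.dim (W (k - 1)) + 1"
      using that False g
      by (intro dim_span_insert flag_subspace[OF W] notin_flag_below_hyperplane[OF v]) auto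
    then show ?thesis
      using that False g flag_dim[OF W, of "k - 1"] unfolding insert_flag_def by simp
  qed (use that flag_dim[OF W] in \<open>simp add: insert_flag_def\<close>)
  have step: "insert_flag W g v k \<subseteq> insert_flag W g v (Suc k)" if "k < CARD('n)" for k
  proof -
    consider "Suc k < g" | "Suc k = g" | "g \<le> k" by linarith
    then show ?thesis
    proof cases
      case 1
      then show ?thesis using flag_Suc_subset[OF W] that unfolding insert_flag_def by auto
    next
      case 2
      then show ?thesis using that vec.span_superset[of "insert v (W k)"]
        unfolding insert_flag_def by auto
    next
      case 3
      then have "insert v (W (k - 1)) \<subseteq> insert v (W k)"
        using flag_mono[OF W, of "k - 1" k] that by auto
      then have "vec.span (insert v (W (k - 1))) \<subseteq> vec.span (insert v (W k))"
        by (rule vec.span_mono)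
      then show ?thesis using that 3 unfolding insert_flag_def by auto
    qed
  qed
  have "vec.subspace (insert_flag W g v k)" if "k \<le> CARD('n)" for k
    using that flag_subspace[OF W] unfolding insert_flag_def by auto
  moreover have "insert_flag W g v k = {}" if "CARD('n) < k" for k
    using that flag_beyond[OF W] unfolding insert_flag_def by auto
  ultimately show ?thesis
    unfolding flags_def using dim step by blast
qed

lemma insert_flag_neq:
  assumes "g < CARD('n)" "v \<notin> W (CARD('n) - 1)"
  shows "insert_flag W g v g \<noteq> W g"
  using in_insert_flag[of g g v] notin_flag_below_hyperplane assms by auto

lemma hf1_insert_flag:
  assumes g: "1 \<le> g" "g < CARD('n)" and v: "v \<notin> W (CARD('n) - 1)"
  shows "hf1 W (insert_flag W g v) = 1"
proof -
  have "insert_flag W g v r \<noteq> W r \<and> W r \<subseteq> insert_flag W g v (r + 1)"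
    if "r \<in> {g..CARD('n) - 1}" for r
    using that g insert_flag_neq[of r v] v vec.span_superset[of "insert v (W r)"]
    unfolding insert_flag_def by auto
  then show ?thesis
    unfolding hf1_def using g by (intro if_P bexI[of _ g]) (auto simp: insert_flag_below)
qed

lemma insert_flag_index_unique:
  assumes "g < CARD('n)" "v \<notin> W (CARD('n) - 1)" "g' < CARD('n)" "v' \<notin> W (CARD('n) - 1)"
    and "insert_flag W g v = insert_flag W g' v'"
  shows "g = g'"
  using insert_flag_neq[of g v] insert_flag_neq[of g' v'] insert_flag_below assms
  by (metis linorder_neqE_nat)

lemma flag_step_eq_span_insert:
  assumes U: "U \<in> flags" and r: "1 \<le> r" "r \<le> CARD('n)"
    and "W (r - 1) \<subseteq> U r" "v \<in> U r" "v \<notin> W (r - 1)"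
  shows "U r = vec.span (insert v (W (r - 1)))"
proof (rule subspace_eq_span_insert)
  show "vec.subspace (W (r - 1))" "vec.subspace (U r)"
    using flag_subspace[OF W] flag_subspace[OF U] r by auto
  show "vec.dim (U r) = vec.dim (W (r - 1)) + 1"
    using flag_dim[OF W] flag_dim[OF U] r by simp
qed (use assms in auto)

lemma adjacent_flag_eq_span_insert:
  assumes V': "V' \<in> flags" and g: "1 \<le> g"
    and above: "\<forall>r\<in>{g..CARD('n)-1}. V' r \<noteq> W r \<and> W r \<subseteq> V' (r + 1)"
    and start: "W (g - 1) \<subseteq> V' g" "v \<in> V' g" "v \<notin> W (g - 1)"
    and r: "g \<le> r" "r \<le> CARD('n)"
  shows "V' r = vec.span (insert v (W (r - 1))) \<and> (r < CARD('n) \<longrightarrow> v \<notin> W r)"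
proof -
  have next_step: "V' r = vec.span (insert v (W (r - 1))) \<and> (r < CARD('n) \<longrightarrow> v \<notin> W r)"
    if r: "g \<le> r" "r \<le> CARD('n)" and sub: "W (r - 1) \<subseteq> V' r" "v \<in> V' r" "v \<notin> W (r - 1)" for r
  proof (intro conjI impI notI)
    show V'_r: "V' r = vec.span (insert v (W (r - 1)))"
      using flag_step_eq_span_insert[OF V' _ r(2) sub] r g by simp
    assume "r < CARD('n)" "v \<in> W r"
    then have "W r = vec.span (insert v (W (r - 1)))"
      using flag_step_eq_span_insert[OF W _ _ _ _ sub(3)] flag_mono[OF W, of "r - 1" r] r g
      by simp
    moreover have "V' r \<noteq> W r" using bspec[OF above, of r] \<open>r < CARD('n)\<close> r by simp
    ultimately show False using V'_r by simp
  qed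
  from r show ?thesis
  proof (induction r rule: dec_induct)
    case base
    then show ?case using next_step start by simp
  next
    case (step r)
    have "v \<in> V' (Suc r)"
      using step vec.span_base[of v] flag_Suc_subset[OF V', of r] by auto
    then show ?case using step above next_step[of "Suc r"] by auto
  qed
qed

lemma flag_eq_insert_flag:
  assumes V': "V' \<in> flags" and g: "1 \<le> g" "g < CARD('n)"
    and below: "\<forall>r\<in>{1..g-1}. W r = V' r"
    and above: "\<forall>r\<in>{g..CARD('n)-1}. V' r \<noteq> W r \<and> W r \<subseteq> V' (r + 1)"
  obtains v where "v \<notin> W (CARD('n) - 1)" "V' = insert_flag W g v"
proof -
  have start: "W (g - 1) \<subseteq> V' g"
    using below g flag_mono[OF V', of "g - 1" g] flag_0[OF W] vec.subspace_0[OF flag_subspace[OF V']]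
    by (cases "g = 1") auto
  have "\<not> V' g \<subseteq> W (g - 1)"
    using vec.dim_subset[of "V' g" "W (g - 1)"] flag_dim[OF V', of g] flag_dim[OF W, of "g - 1"] g
    by auto
  then obtain v where v: "v \<in> V' g" "v \<notin> W (g - 1)" by blast
  note span = adjacent_flag_eq_span_insert[OF V' g(1) above start v]
  have "V' = insert_flag W g v"
  proof
    fix r
    consider "r = 0" | "1 \<le> r" "r < g" | "g \<le> r" "r \<le> CARD('n)" | "CARD('n) < r" by linarith
    then show "V' r = insert_flag W g v r"
    proof cases
      case 1
      then show ?thesis using flag_0[OF W] flag_0[OF V'] g by (simp add: insert_flag_below)
    qed (use below span flag_beyond[OF V'] g in \<open>auto simp: insert_flag_def\<close>)
  qed
  moreover have "v \<notin> W (CARD('n) - 1)" using span[of "CARD('n) - 1"] g by simp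
  ultimately show ?thesis using that by blast
qed

lemma hf1_support:
  "{V' \<in> flags. hf1 W V' = 1} = insert W (\<Union>g\<in>{1..<CARD('n)}. insert_flag W g ` (- W (CARD('n) - 1)))"
proof safe
  fix V' assume V': "V' \<in> flags" "hf1 W V' = 1" and "V' \<notin> (\<Union>g\<in>{1..<CARD('n)}. insert_flag W g ` (- W (CARD('n) - 1)))"
  then have no_insert: "\<not> (1 \<le> g \<and> g < CARD('n) \<and> v \<notin> W (CARD('n) - 1) \<and> V' = insert_flag W g v)" for g v
    by auto
  have "\<exists>g\<in>{1..CARD('n)}. (\<forall>r\<in>{1..g-1}. W r = V' r)
      \<and> (\<forall>r\<in>{g..CARD('n)-1}. V' r \<noteq> W r \<and> W r \<subseteq> V' (r + 1))"
    using V'(2) unfolding hf1_def by (simp split: if_splits)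
  then obtain g where g_range: "g \<in> {1..CARD('n)}" and below: "\<forall>r\<in>{1..g-1}. W r = V' r"
    and above: "\<forall>r\<in>{g..CARD('n)-1}. V' r \<noteq> W r \<and> W r \<subseteq> V' (r + 1)"
    by blast
  have g: "1 \<le> g" "g \<le> CARD('n)" using g_range by auto
  have "g = CARD('n)"
  proof (rule ccontr)
    assume "g \<noteq> CARD('n)"
    then have "g < CARD('n)" using g by simp
    then obtain v where "v \<notin> W (CARD('n) - 1)" "V' = insert_flag W g v"
      using flag_eq_insert_flag[OF V'(1) g(1) _ below above] by blast
    then show False using no_insert g \<open>g < CARD('n)\<close> by blast
  qed
  show "V' = W"
  proof
    fix r
    consider "r = 0" | "r \<in> {1..g-1}" | "r = CARD('n)" | "CARD('n) < r"
      using \<open>g = CARD('n)\<close> by fastforce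
    then show "V' r = W r"
    proof cases
      case 2
      then show ?thesis using below by simp
    qed (use flag_0[OF W] flag_0[OF V'(1)] flag_top[OF W] flag_top[OF V'(1)]
          flag_beyond[OF W] flag_beyond[OF V'(1)] in simp_all)
  qed
qed (use W hf1_self insert_flag_in_flags hf1_insert_flag in auto)

end

lemma insert_flag_fibre:
  fixes W :: "nat \<Rightarrow> ('a::field^'n) set"
  assumes W: "W \<in> flags" and g: "1 \<le> g" "g < CARD('n)" and v: "v \<notin> W (CARD('n) - 1)"
  shows "{u. u \<notin> W (CARD('n) - 1) \<and> insert_flag W g u = insert_flag W g v}
         = vec.span (insert v (W (g - 1))) - W (g - 1)"
proof safe
  fix u assume "insert_flag W g u = insert_flag W g v"
  then have "insert_flag W g u g = insert_flag W g v g" by simp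
  then have "vec.span (insert u (W (g - 1))) = vec.span (insert v (W (g - 1)))"
    using g unfolding insert_flag_def by simp
  then show "u \<in> vec.span (insert v (W (g - 1)))" by (metis insertI1 vec.span_base)
next
  fix u assume "u \<notin> W (CARD('n) - 1)" "u \<in> W (g - 1)"
  then show False using notin_flag_below_hyperplane[OF W] g by auto
next
  fix u assume u: "u \<in> vec.span (insert v (W (g - 1)))" "u \<notin> W (g - 1)"
  have "vec.subspace (W (g - 1))" using flag_subspace[OF W] g by simp
  then have "v \<in> vec.span (insert u (W (g - 1)))"
    using vec.in_span_insert[OF u(1)] u(2) vec.span_eq_iff by blast
  then have same_span: "vec.span (insert u (W (g - 1))) = vec.span (insert v (W (g - 1)))"
    using u(1) by (intro subset_antisym vec.span_minimal) (auto intro: vec.span_base)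
  show "insert_flag W g u = insert_flag W g v"
  proof
    fix r
    show "insert_flag W g u r = insert_flag W g v r"
    proof (cases "g \<le> r \<and> r \<le> CARD('n)")
      case True
      then have "W (g - 1) \<subseteq> W (r - 1)" by (intro flag_mono[OF W]) auto
      then show ?thesis using span_insert_cong[OF same_span] True unfolding insert_flag_def by simp
    qed (auto simp: insert_flag_def)
  qed
  assume "u \<in> W (CARD('n) - 1)"
  moreover have "W (g - 1) \<subseteq> W (CARD('n) - 1)" using g by (intro flag_mono[OF W]) auto
  ultimately have "vec.span (insert u (W (g - 1))) \<subseteq> W (CARD('n) - 1)"
    using flag_subspace[OF W, of "CARD('n) - 1"] by (intro vec.span_minimal) auto
  then show False using same_span v vec.span_base[of v "insert v (W (g - 1))"] by auto
qed

lemma card_insert_flag_image: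
  fixes W :: "nat \<Rightarrow> ('a::{field,finite}^'n) set" and P :: "(nat \<Rightarrow> ('a^'n) set) \<Rightarrow> bool"
  assumes W: "W \<in> flags" and g: "1 \<le> g" "g < CARD('n)"
  defines "A \<equiv> {v. v \<notin> W (CARD('n) - 1) \<and> P (insert_flag W g v)}"
  shows "card (insert_flag W g ` A) * (CARD('a) ^ g - CARD('a) ^ (g - 1)) = card A"
proof -
  have fibre: "card {u \<in> A. insert_flag W g u = y} = CARD('a) ^ g - CARD('a) ^ (g - 1)"
    if y_image: "y \<in> insert_flag W g ` A" for y
  proof -
    obtain v where "v \<in> A" and y: "y = insert_flag W g v" using y_image by blast
    then have v: "v \<notin> W (CARD('n) - 1)" unfolding A_def by simp
    have S: "vec.subspace (W (g - 1))" and dim_S: "vec.dim (W (g - 1)) = g - 1"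
      using flag_subspace[OF W] flag_dim[OF W] g by auto
    have "{u \<in> A. insert_flag W g u = y}
        = {u. u \<notin> W (CARD('n) - 1) \<and> insert_flag W g u = insert_flag W g v}"
      using \<open>v \<in> A\<close> unfolding A_def y by auto
    also have "\<dots> = vec.span (insert v (W (g - 1))) - W (g - 1)"
      by (rule insert_flag_fibre[OF W g v])
    finally show ?thesis
      using card_diff_subspace[OF S vec.subspace_span, of "insert v (W (g - 1))"]
        vec.span_superset[of "insert v (W (g - 1))"] dim_S g
        dim_span_insert[OF S notin_flag_below_hyperplane[OF W v, of "g - 1"]]
      by auto
  qed
  have "card A = (\<Sum>y\<in>insert_flag W g ` A. card {u \<in> A. insert_flag W g u = y})"
    unfolding card_eq_sum by (rule sum.image_gen) simp
  also have "\<dots> = (\<Sum>y\<in>insert_flag W g ` A. CARD('a) ^ g - CARD('a) ^ (g - 1))"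
    using fibre by (rule sum.cong[OF refl])
  finally show ?thesis by simp
qed

lemma card_hf1_support_filter:
  fixes W :: "nat \<Rightarrow> ('a::{field,finite}^'n) set"
  assumes W: "W \<in> flags"
  shows "card {V' \<in> flags. hf1 W V' = 1 \<and> P V'}
       = (if P W then 1 else 0)
         + (\<Sum>g\<in>{1..<CARD('n)}. card (insert_flag W g ` {v. v \<notin> W (CARD('n) - 1) \<and> P (insert_flag W g v)}))"
proof -
  let ?H = "W (CARD('n) - 1)"
  let ?F = "\<lambda>g. insert_flag W g ` {v. v \<notin> ?H \<and> P (insert_flag W g v)}"
  have "{V' \<in> flags. hf1 W V' = 1 \<and> P V'} = {V' \<in> {V' \<in> flags. hf1 W V' = 1}. P V'}" by blast
  also have "\<dots> = (if P W then {W} else {}) \<union> (\<Union>g\<in>{1..<CARD('n)}. ?F g)"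
    unfolding hf1_support[OF W] by auto
  finally have decomposition: "{V' \<in> flags. hf1 W V' = 1 \<and> P V'} = \<dots>" .
  have W_notin: "W \<notin> (\<Union>g\<in>{1..<CARD('n)}. ?F g)"
    using insert_flag_neq[OF W] by fastforce
  have "?F g \<inter> ?F g' = {}" if "g \<in> {1..<CARD('n)}" "g' \<in> {1..<CARD('n)}" "g \<noteq> g'" for g g'
    using insert_flag_index_unique[OF W, of g _ g'] that by fastforce
  then have "card (\<Union>g\<in>{1..<CARD('n)}. ?F g) = (\<Sum>g\<in>{1..<CARD('n)}. card (?F g))"
    by (intro card_UN_disjoint) auto
  then show ?thesis
    unfolding decomposition using W_notin by (simp add: card_insert_if)
qed

section \<open>Adjacent flags in X_t\<close>

definition inserted_seq :: "(nat \<Rightarrow> nat) \<Rightarrow> nat \<Rightarrow> nat \<Rightarrow> nat \<Rightarrow> nat" where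
  "inserted_seq a g l r = (if r < g then a r else max (a (r - 1)) l)"

lemma level_insert_flag:
  fixes W V :: "nat \<Rightarrow> ('a::field^'n) set"
  assumes W: "W \<in> flags" and V: "V \<in> flags" and r: "r \<le> CARD('n)"
  shows "level V (insert_flag W g v r) = inserted_seq (\<lambda>r. level V (W r)) g (level V {v}) r"
  using level_span_insert[OF V flag_subspace[OF W, of "r - 1"]] r
  unfolding insert_flag_def inserted_seq_def by simp

lemma inserted_seq_increasingD:
  fixes a :: "nat \<Rightarrow> nat"
  assumes inc: "\<forall>r. 1 \<le> r \<and> r < m \<longrightarrow> inserted_seq a g l r < inserted_seq a g l (Suc r)"
    and a0: "a 0 < l" and g: "1 \<le> g" "g \<le> m"
  shows "(\<forall>r. 1 \<le> r \<and> r < m - 1 \<longrightarrow> a r < a (Suc r)) \<and> a (g - 1) < l \<and> (g < m \<longrightarrow> l < a g)"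
proof -
  have above: "max (a (r - 1)) l < a r" if "g \<le> r" "r < m" for r
  proof -
    have "inserted_seq a g l r < inserted_seq a g l (Suc r)" using inc that g by simp
    then show ?thesis unfolding inserted_seq_def using that by (auto split: if_splits)
  qed
  have "a (g - 1) < l"
  proof (cases "g = 1")
    case False
    then have "1 \<le> g - 1 \<and> g - 1 < m" using g by auto
    then have "inserted_seq a g l (g - 1) < inserted_seq a g l (Suc (g - 1))" using inc by blast
    then show ?thesis unfolding inserted_seq_def using g False by (simp split: if_splits)
  qed (use a0 in simp)
  moreover have "a r < a (Suc r)" if "1 \<le> r" "r < m - 1" for r
  proof (cases "Suc r < g")
    case True
    have "inserted_seq a g l r < inserted_seq a g l (Suc r)" using inc that by simp
    then show ?thesis using True unfolding inserted_seq_def by simp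
  qed (use above[of "Suc r"] that in auto)
  ultimately show ?thesis using above[of g] by auto
qed

lemma inserted_seq_increasingI:
  fixes a :: "nat \<Rightarrow> nat"
  assumes mono: "\<And>r s. r \<le> s \<Longrightarrow> s \<le> m \<Longrightarrow> a r \<le> a s"
    and a_inc: "\<And>r. 1 \<le> r \<Longrightarrow> r < m - 1 \<Longrightarrow> a r < a (Suc r)"
    and below: "a (g - 1) < l" and above: "g < m \<Longrightarrow> l < a g"
    and g: "1 \<le> g" "g \<le> m" and r: "1 \<le> r" "r < m"
  shows "inserted_seq a g l r < inserted_seq a g l (Suc r)"
proof -
  consider "Suc r < g" | "Suc r = g" | "g \<le> r" by linarith
  then show ?thesis
  proof cases
    case 3
    then have l_less: "l < a r" using above mono[of g r] r by fastforce
    moreover have "a (r - 1) < a r"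
    proof (cases "r = g")
      case False
      then show ?thesis using a_inc[of "r - 1"] r 3 g by simp
    qed (use below l_less in simp)
    ultimately show ?thesis unfolding inserted_seq_def using 3 by auto
  qed (use a_inc below r g in \<open>auto simp: inserted_seq_def\<close>)
qed

definition hX_vectors ::
  "(nat \<Rightarrow> ('a::field^'n) set) \<Rightarrow> (nat \<Rightarrow> ('a^'n) set) \<Rightarrow> nat \<Rightarrow> nat \<Rightarrow> ('a^'n) set" where
  "hX_vectors W V t g = {v. v \<notin> W (CARD('n) - 1) \<and> (insert_flag W g v, V) \<in> hX t}"

context
  fixes W V :: "nat \<Rightarrow> ('a::field^'n) set" and t :: nat
  assumes W: "W \<in> flags" and V: "V \<in> flags"
begin

lemma hX_vectors_high:
  assumes g: "CARD('n) - t < g" "g < CARD('n)"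
  shows "hX_vectors W V t g
       = (if levels_increasing W V (CARD('n) - t) then - W (CARD('n) - 1) else {})"
proof -
  have "(insert_flag W g v, V) \<in> hX t \<longleftrightarrow> levels_increasing W V (CARD('n) - t)"
    if v: "v \<notin> W (CARD('n) - 1)" for v
  proof -
    have "(insert_flag W g v, V) \<in> hX t \<longleftrightarrow> levels_increasing (insert_flag W g v) V (CARD('n) - t)"
      using g by (intro hX_iff_levels_increasing insert_flag_in_flags[OF W _ v] V) simp
    also have "\<dots> \<longleftrightarrow> levels_increasing W V (CARD('n) - t)"
      unfolding levels_increasing_def using g by (intro iff_allI) (auto simp: insert_flag_below)
    finally show ?thesis .
  qed
  then show ?thesis unfolding hX_vectors_def by auto
qed

lemma insert_flag_levels_increasing_iff:
  assumes g: "1 \<le> g" "g \<le> m" "m < CARD('n)" and v: "v \<notin> W (CARD('n) - 1)"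
  shows "levels_increasing (insert_flag W g v) V m \<longleftrightarrow> levels_increasing W V (m - 1)
       \<and> level V (W (g - 1)) < level V {v} \<and> (g < m \<longrightarrow> level V {v} < level V (W g))"
proof -
  let ?a = "\<lambda>r. level V (W r)" and ?l = "level V {v}"
  have "v \<noteq> 0"
    using v vec.subspace_0[OF flag_subspace[OF W, of "CARD('n) - 1"]] by auto
  then have a0: "?a 0 < ?l" using level_pos[OF V, of "{v}"] level_flag_0[OF V W] by simp
  have levels: "levels_increasing (insert_flag W g v) V m
      \<longleftrightarrow> (\<forall>r. 1 \<le> r \<and> r < m \<longrightarrow> inserted_seq ?a g ?l r < inserted_seq ?a g ?l (Suc r))"
    unfolding levels_increasing_def using g by (intro iff_allI) (simp add: level_insert_flag[OF W V])
  show ?thesis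
  proof
    assume "levels_increasing (insert_flag W g v) V m"
    then have "\<forall>r. 1 \<le> r \<and> r < m \<longrightarrow> inserted_seq ?a g ?l r < inserted_seq ?a g ?l (Suc r)"
      unfolding levels .
    then show "levels_increasing W V (m - 1) \<and> ?a (g - 1) < ?l \<and> (g < m \<longrightarrow> ?l < ?a g)"
      unfolding levels_increasing_def
      by (rule inserted_seq_increasingD[where a="\<lambda>r. level V (W r)", OF _ a0 g(1,2)])
  next
    assume "levels_increasing W V (m - 1) \<and> ?a (g - 1) < ?l \<and> (g < m \<longrightarrow> ?l < ?a g)"
    then have a_inc: "\<And>r. 1 \<le> r \<Longrightarrow> r < m - 1 \<Longrightarrow> ?a r < ?a (Suc r)"
      and below: "?a (g - 1) < ?l" and above: "g < m \<Longrightarrow> ?l < ?a g"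
      unfolding levels_increasing_def by auto
    have "inserted_seq ?a g ?l r < inserted_seq ?a g ?l (Suc r)" if "1 \<le> r" "r < m" for r
      using a_inc below above g that
      by (intro inserted_seq_increasingI[where m=m] level_flag_mono[OF V W]) auto
    then show "levels_increasing (insert_flag W g v) V m" unfolding levels by blast
  qed
qed

lemma hX_vectors_low:
  assumes g: "1 \<le> g" "g \<le> CARD('n) - t" and t: "1 \<le> t"
  shows "hX_vectors W V t g
       = (if levels_increasing W V (CARD('n) - t - 1)
          then V (if g < CARD('n) - t then level V (W g) - 1 else CARD('n))
               - V (level V (W (g - 1))) - W (CARD('n) - 1)
          else {})"
proof -
  let ?m = "CARD('n) - t"
  have mn: "?m < CARD('n)" and gn: "g < CARD('n)" using g t by linarith+
  have lower: "level V (W (g - 1)) < level V {v} \<longleftrightarrow> v \<notin> V (level V (W (g - 1)))" for v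
    using subset_iff_level_le[OF V level_le_card[OF V], of "{v}"] by auto
  have upper: "level V {v} < level V (W g) \<longleftrightarrow> v \<in> V (level V (W g) - 1)" for v
  proof -
    have "1 \<le> level V (W g)" using level_pos[OF V] flag_nontrivial[OF W g(1)] gn by simp
    then show ?thesis
      using subset_iff_level_le[OF V, of "level V (W g) - 1" "{v}"] level_le_card[OF V, of "W g"]
      by auto
  qed
  have "(insert_flag W g v, V) \<in> hX t \<longleftrightarrow> levels_increasing W V (?m - 1)
      \<and> v \<notin> V (level V (W (g - 1))) \<and> v \<in> V (if g < ?m then level V (W g) - 1 else CARD('n))"
    if v: "v \<notin> W (CARD('n) - 1)" for v
    using hX_iff_levels_increasing[OF insert_flag_in_flags[OF W g(1) v] V, of t]
      insert_flag_levels_increasing_iff[OF g(1,2) mn v] lower upper flag_top[OF V] by auto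
  then show ?thesis unfolding hX_vectors_def by auto
qed

end

lemma card_field_ge_2: "2 \<le> CARD('a::{field,finite})"
  using card_mono[of UNIV "{0::'a, 1}"] by simp

lemma power_diff_power_pred:
  fixes q :: nat
  shows "1 \<le> g \<Longrightarrow> q ^ g - q ^ (g - 1) = q ^ (g - 1) * (q - 1)"
  by (cases g) (simp_all add: diff_mult_distrib2 mult.commute)

text \<open>The number of lines of V_i not contained in H, i.e. card (V_i - H) / (q - 1).\<close>

definition lines_outside :: "(nat \<Rightarrow> ('a::{field,finite}^'n) set) \<Rightarrow> ('a^'n) set \<Rightarrow> nat \<Rightarrow> nat" where
  "lines_outside V H i = (if V i \<subseteq> H then 0 else CARD('a) ^ (i - 1))"

context
  fixes V :: "nat \<Rightarrow> ('a::{field,finite}^'n) set" and H :: "('a^'n) set"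
  assumes V: "V \<in> flags" and H: "vec.subspace H" "vec.dim H = CARD('n) - 1"
begin

lemma card_flag_diff_hyperplane:
  assumes "i \<le> CARD('n)"
  shows "card (V i - H) = lines_outside V H i * (CARD('a) - 1)"
proof (cases "V i \<subseteq> H")
  case False
  then have "1 \<le> i" using flag_0[OF V] vec.subspace_0[OF H(1)] by (cases i) auto
  then show ?thesis
    using card_diff_hyperplane[OF flag_subspace[OF V assms] H False] flag_dim[OF V assms] False
      power_diff_power_pred[of i "CARD('a)"]
    by (simp add: lines_outside_def)
qed (simp add: lines_outside_def)

lemma lines_outside_top: "lines_outside V H CARD('n) = CARD('a) ^ (CARD('n) - 1)"
proof -
  have "\<not> UNIV \<subseteq> H"
  proof
    assume "UNIV \<subseteq> H"
    then have "H = UNIV" by blast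
    then have "vec.dim H = CARD('n)" using vec_dim_card[where 'a='a and 'n='n] by (simp only:)
    then show False using H(2) zero_less_card_finite[where 'a='n] by linarith
  qed
  then show ?thesis by (simp add: lines_outside_def flag_top[OF V])
qed

text \<open>With a the level of U, if V_(a-1) were contained in H then, comparing dimensions,
  V_(a-1) = V_a \<inter> H, which contains U.\<close>

lemma lines_outside_below_level:
  assumes "U \<subseteq> H"
  shows "lines_outside V H (level V U - 1) * CARD('a) = lines_outside V H (level V U)"
proof (cases "V (level V U) \<subseteq> H")
  case True
  then have "V (level V U - 1) \<subseteq> H" using flag_mono[OF V, of "level V U - 1" "level V U"]
    level_le_card[OF V] by auto
  then show ?thesis using True by (simp add: lines_outside_def)
next
  case False
  let ?a = "level V U"
  have a: "?a \<le> CARD('n)" by (rule level_le_card[OF V])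
  have below_not: "\<not> V (?a - 1) \<subseteq> H"
  proof
    assume below: "V (?a - 1) \<subseteq> H"
    have "vec.dim (V ?a \<inter> H) = ?a - 1"
      using dim_inter_hyperplane[OF flag_subspace[OF V a] H False] flag_dim[OF V a] by simp
    moreover have "V (?a - 1) \<subseteq> V ?a \<inter> H" using below flag_mono[OF V, of "?a - 1" ?a] a by auto
    ultimately have "V (?a - 1) = V ?a \<inter> H"
      using vec.subspace_dim_equal[OF flag_subspace[OF V] vec.subspace_inter[OF flag_subspace[OF V a] H(1)]]
        flag_dim[OF V, of "?a - 1"] a by simp
    then have "U \<subseteq> V (?a - 1)" using level_subset[OF V, of U] assms by auto
    then have "?a \<le> ?a - 1" by (rule level_le[OF V])
    moreover have "?a \<noteq> 0" using below False by (cases ?a) auto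
    ultimately show False by simp
  qed
  have "?a - 1 \<noteq> 0"
  proof
    assume "?a - 1 = 0"
    then have "V (?a - 1) = {0}" using flag_0[OF V] by simp
    then show False using below_not vec.subspace_0[OF H(1)] by simp
  qed
  then obtain b where "?a = Suc (Suc b)" by (intro that[of "?a - 2"]) arith
  then show ?thesis using False below_not by (simp add: lines_outside_def)
qed

end

lemma sum_mult_power_telescope:
  fixes c \<phi> a :: "nat \<Rightarrow> nat" and q m N :: nat
  assumes piece: "\<And>g. 1 \<le> g \<Longrightarrow> g \<le> m \<Longrightarrow>
      c g * q ^ (g - 1) + \<phi> (a (g - 1)) = \<phi> (if g < m then a g - 1 else N)"
    and step: "\<And>g. 1 \<le> g \<Longrightarrow> g < m \<Longrightarrow> \<phi> (a g - 1) * q = \<phi> (a g)"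
    and start: "\<phi> (a 0) = 0" and m: "1 \<le> m"
  shows "(\<Sum>g=1..m. c g) * q ^ (m - 1) = \<phi> N"
proof -
  have partial: "(\<Sum>g=1..k. c g) * q ^ k = \<phi> (a k)" if "k < m" for k
    using that
  proof (induction k)
    case (Suc k)
    have "(\<Sum>g=1..Suc k. c g) * q ^ Suc k = ((\<Sum>g=1..k. c g) * q ^ k + c (Suc k) * q ^ k) * q"
      by (simp add: algebra_simps)
    also have "\<dots> = \<phi> (a (Suc k) - 1) * q"
      using Suc piece[of "Suc k"] by (simp add: add.commute)
    also have "\<dots> = \<phi> (a (Suc k))" using step[of "Suc k"] Suc.prems by simp
    finally show ?case .
  qed (use start in simp)
  obtain k where k: "m = Suc k" using m by (cases m) auto
  have "(\<Sum>g=1..m. c g) * q ^ (m - 1) = (\<Sum>g=1..k. c g) * q ^ k + c m * q ^ k"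
    using k by (simp add: algebra_simps)
  also have "\<dots> = \<phi> N" using partial[of k] piece[of m] k by (simp add: add.commute)
  finally show ?thesis .
qed

context
  fixes W V :: "nat \<Rightarrow> ('a::{field,finite}^'n) set" and t :: nat
  assumes W: "W \<in> flags" and V: "V \<in> flags"
begin

lemma card_hX_vectors_image:
  assumes "1 \<le> g" "g < CARD('n)"
  shows "card (insert_flag W g ` hX_vectors W V t g) * (CARD('a) ^ g - CARD('a) ^ (g - 1))
       = card (hX_vectors W V t g)"
  unfolding hX_vectors_def by (rule card_insert_flag_image[OF W assms])

lemma card_hX_vectors_image_high:
  assumes g: "CARD('n) - t < g" "g < CARD('n)"
  shows "card (insert_flag W g ` hX_vectors W V t g)
       = (if levels_increasing W V (CARD('n) - t) then CARD('a) ^ (CARD('n) - g) else 0)"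
proof -
  let ?q = "CARD('a)"
  have g1: "1 \<le> g" using g by simp
  have fibre_pos: "0 < ?q ^ g - ?q ^ (g - 1)"
    using card_field_ge_2[where 'a='a] power_diff_power_pred[OF g1, of ?q] by simp
  have "card (- W (CARD('n) - 1)) = ?q ^ CARD('n) - ?q ^ (CARD('n) - 1)"
    using card_diff_subspace[OF flag_subspace[OF W] vec.subspace_UNIV, of "CARD('n) - 1"]
      flag_dim[OF W, of "CARD('n) - 1"] by (simp add: Compl_eq_Diff_UNIV card_cart_basis)
  also have "\<dots> = ?q ^ (CARD('n) - 1) * (?q - 1)"
    by (rule power_diff_power_pred) (use g in auto)
  also have "\<dots> = ?q ^ (CARD('n) - g) * (?q ^ (g - 1) * (?q - 1))"
  proof -
    have "CARD('n) - 1 = (CARD('n) - g) + (g - 1)" using g by auto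
    then show ?thesis by (simp only: power_add mult.assoc)
  qed
  also have "\<dots> = ?q ^ (CARD('n) - g) * (?q ^ g - ?q ^ (g - 1))"
    using power_diff_power_pred[OF g1, of ?q] by simp
  finally show ?thesis
    using card_hX_vectors_image[of g] hX_vectors_high[OF W V g] g fibre_pos by auto
qed

lemma sum_card_hX_vectors_image_high:
  assumes t: "t \<le> CARD('n)"
  shows "(\<Sum>g\<in>{CARD('n) - t<..<CARD('n)}. card (insert_flag W g ` hX_vectors W V t g))
       = (if levels_increasing W V (CARD('n) - t) then \<Sum>i\<in>{1..<t}. CARD('a) ^ i else 0)"
proof -
  have "(\<Sum>g\<in>{CARD('n) - t<..<CARD('n)}. card (insert_flag W g ` hX_vectors W V t g))
      = (\<Sum>g\<in>{CARD('n) - t<..<CARD('n)}.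
           if levels_increasing W V (CARD('n) - t) then CARD('a) ^ (CARD('n) - g) else 0)"
    by (intro sum.cong refl card_hX_vectors_image_high) auto
  also have "(\<Sum>g\<in>{CARD('n) - t<..<CARD('n)}. CARD('a) ^ (CARD('n) - g)) = (\<Sum>i\<in>{1..<t}. CARD('a) ^ i)"
    using t by (intro sum.reindex_bij_witness[where i="\<lambda>i. CARD('n) - i" and j="\<lambda>g. CARD('n) - g"]) auto
  ultimately show ?thesis by (simp split: if_splits)
qed

lemma card_hX_vectors_image_low:
  assumes g: "1 \<le> g" "g \<le> CARD('n) - t" and t: "1 \<le> t"
    and inc: "levels_increasing W V (CARD('n) - t - 1)"
  shows "card (insert_flag W g ` hX_vectors W V t g) * CARD('a) ^ (g - 1)
         + lines_outside V (W (CARD('n) - 1)) (level V (W (g - 1)))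
       = lines_outside V (W (CARD('n) - 1))
           (if g < CARD('n) - t then level V (W g) - 1 else CARD('n))"
proof -
  let ?q = "CARD('a)" and ?H = "W (CARD('n) - 1)" and ?m = "CARD('n) - t"
  let ?x = "level V (W (g - 1))" and ?y = "if g < ?m then level V (W g) - 1 else CARD('n)"
  have gn: "g < CARD('n)" using g t by linarith
  have H: "vec.subspace ?H" "vec.dim ?H = CARD('n) - 1"
    using flag_subspace[OF W] flag_dim[OF W] by auto
  have y: "?y \<le> CARD('n)" using level_le_card[OF V, of "W g"] by auto
  have "?x \<le> ?y"
  proof (cases "g < ?m")
    case True
    then have "g \<le> ?m - 1" by simp
    then show ?thesis using level_flag_pred_less[OF V W inc g(1) _ less_imp_le[OF gn]] True by simp
  qed (use level_le_card[OF V] in simp)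
  then have sub: "V ?x - ?H \<subseteq> V ?y - ?H" using flag_mono[OF V _ y] by blast
  have "hX_vectors W V t g = (V ?y - ?H) - (V ?x - ?H)"
    using hX_vectors_low[OF W V g t] inc by auto
  then have "card (hX_vectors W V t g) + card (V ?x - ?H) = card (V ?y - ?H)"
    using card_Diff_subset[OF _ sub] card_mono[OF _ sub] by simp
  have "(card (insert_flag W g ` hX_vectors W V t g) * ?q ^ (g - 1) + lines_outside V ?H ?x) * (?q - 1)
      = card (insert_flag W g ` hX_vectors W V t g) * (?q ^ (g - 1) * (?q - 1))
        + lines_outside V ?H ?x * (?q - 1)"
    by (simp only: add_mult_distrib mult.assoc)
  also have "\<dots> = card (hX_vectors W V t g) + card (V ?x - ?H)"
    using card_hX_vectors_image[OF g(1) gn] card_flag_diff_hyperplane[OF V H, of ?x] y \<open>?x \<le> ?y\<close>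
      power_diff_power_pred[OF g(1), of ?q]
    by simp
  also have "\<dots> = lines_outside V ?H ?y * (?q - 1)"
    using \<open>card (hX_vectors W V t g) + card (V ?x - ?H) = card (V ?y - ?H)\<close>
      card_flag_diff_hyperplane[OF V H y] by simp
  finally show ?thesis using card_field_ge_2[where 'a='a] by simp
qed

lemma sum_card_hX_vectors_image_low:
  assumes t: "1 \<le> t" "t < CARD('n)"
  shows "(\<Sum>g=1..CARD('n) - t. card (insert_flag W g ` hX_vectors W V t g))
       = (if levels_increasing W V (CARD('n) - t - 1) then CARD('a) ^ t else 0)"
proof (cases "levels_increasing W V (CARD('n) - t - 1)")
  case True
  let ?q = "CARD('a)" and ?H = "W (CARD('n) - 1)" and ?m = "CARD('n) - t"
  have H: "vec.subspace ?H" "vec.dim ?H = CARD('n) - 1"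
    using flag_subspace[OF W] flag_dim[OF W] by auto
  have "(\<Sum>g=1..?m. card (insert_flag W g ` hX_vectors W V t g)) * ?q ^ (?m - 1)
      = lines_outside V ?H CARD('n)"
  proof (rule sum_mult_power_telescope[where a="\<lambda>r. level V (W r)" and \<phi>="lines_outside V ?H"])
    show "lines_outside V ?H (level V (W g) - 1) * ?q = lines_outside V ?H (level V (W g))"
      if "1 \<le> g" "g < ?m" for g
      using that t by (intro lines_outside_below_level[OF V H] flag_mono[OF W]) auto
    show "lines_outside V ?H (level V (W 0)) = 0"
      using flag_0[OF V] vec.subspace_0[OF H(1)] by (simp add: lines_outside_def level_flag_0[OF V W])
  qed (use card_hX_vectors_image_low t(1) True t in auto)
  also have "\<dots> = ?q ^ t * ?q ^ (?m - 1)"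
    using lines_outside_top[OF V H] t by (simp flip: power_add)
  finally show ?thesis using True by simp
next
  case False
  then show ?thesis using hX_vectors_low[OF W V _ _ t(1)] by simp
qed

end

lemma hconv_hf1_hft:
  fixes W V :: "nat \<Rightarrow> ('a::{field,finite}^'n) set"
  shows "hconv hf1 (hft t) W V = of_nat (card {V' \<in> flags. hf1 W V' = 1 \<and> (V', V) \<in> hX t})"
proof -
  have "hconv hf1 (hft t) W V = (\<Sum>V'\<in>flags. if hf1 W V' = 1 \<and> (V', V) \<in> hX t then 1 else 0)"
    unfolding hconv_def by (rule sum.cong) (auto simp: hf1_def hft_def)
  also have "\<dots> = (\<Sum>V'\<in>{V' \<in> flags. hf1 W V' = 1 \<and> (V', V) \<in> hX t}. 1)"
    by (rule sum.inter_filter[OF finite_flags, symmetric])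
  finally show ?thesis by simp
qed

lemma card_hf1_neighbours_in_hX:
  fixes W V :: "nat \<Rightarrow> ('a::{field,finite}^'n) set"
  assumes W: "W \<in> flags" and V: "V \<in> flags" and t: "1 \<le> t" "t < CARD('n)"
  shows "card {V' \<in> flags. hf1 W V' = 1 \<and> (V', V) \<in> hX t}
       = (if levels_increasing W V (CARD('n) - t) then \<Sum>i<t. CARD('a) ^ i else 0)
         + (if levels_increasing W V (CARD('n) - t - 1) then CARD('a) ^ t else 0)"
proof -
  let ?m = "CARD('n) - t"
  let ?c = "\<lambda>g. card (insert_flag W g ` hX_vectors W V t g)"
  have split: "{1..<CARD('n)} = {1..?m} \<union> {?m<..<CARD('n)}" using t by auto
  have "(\<Sum>g\<in>{1..<CARD('n)}. ?c g) = (\<Sum>g=1..?m. ?c g) + (\<Sum>g\<in>{?m<..<CARD('n)}. ?c g)"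
    unfolding split by (rule sum.union_disjoint) auto
  moreover have "{..<t} = insert 0 {1..<t}" using t by auto
  ultimately show ?thesis
    using card_hf1_support_filter[OF W, of "\<lambda>V'. (V', V) \<in> hX t"]
      hX_iff_levels_increasing[OF W V, of t] sum_card_hX_vectors_image_low[OF W V t]
      sum_card_hX_vectors_image_high[OF W V less_imp_le[OF t(2)]]
    by (simp add: hX_vectors_def)
qed

theorem lemma3:
  fixes W V :: "nat \<Rightarrow> ('a::{field,finite} ^ 'n) set"
    and t :: nat
  assumes "CARD('n) \<ge> 2"
    and "1 \<le> t" and "t \<le> CARD('n) - 1"
    and "W \<in> flags" and "V \<in> flags"
  shows "hconv hf1 (hft t) W V
         = (\<Sum>i<t. (of_nat CARD('a) :: complex) ^ i) * hft t W V
           + (of_nat CARD('a) :: complex) ^ t * hft (t + 1) W V"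
proof -
  have t: "1 \<le> t" "t < CARD('n)" using assms(1-3) by auto
  have "hconv hf1 (hft t) W V = of_nat (card {V' \<in> flags. hf1 W V' = 1 \<and> (V', V) \<in> hX t})"
    by (rule hconv_hf1_hft)
  also have "\<dots> = of_nat ((if levels_increasing W V (CARD('n) - t) then \<Sum>i<t. CARD('a) ^ i else 0)
         + (if levels_increasing W V (CARD('n) - (t + 1)) then CARD('a) ^ t else 0))"
    using card_hf1_neighbours_in_hX[OF assms(4,5) t] by simp
  also have "\<dots> = (\<Sum>i<t. (of_nat CARD('a) :: complex) ^ i) * hft t W V
           + (of_nat CARD('a) :: complex) ^ t * hft (t + 1) W V"
    using hft_eq[OF assms(4,5)] by simp
  finally show ?thesis .
qed

end
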